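(* Let $\mathcal{H}$ be a hypertree. Then the edges of $Comp(\mathcal{H})$ are exactly the nonempty subsets of $V(\mathcal{H})$ that induce a subtree of every host tree of $\mathcal{H}$. Additionally, if $\mathcal{H}'$ is a hypertree equivalent to $\mathcal{H}$, then $E(Simp(\mathcal{H}'))\subseteq E(Comp(\mathcal{H}))$.
   Context: A hypergraph $\mathcal{H}$ has a finite vertex set $V(\mathcal{H})$ and a finite family $E(\mathcal{H})$ (repetitions allowed) of nonempty subsets (edges). A host tree of $\mathcal{H}$ is a tree with vertex set $V(\mathcal{H})$ in which every edge induces a connected subgraph; $\mathcal{H}$ is a hypertree if it has one. Two hypergraphs on the same vertex set are equivalent if they have the same host trees. $Simp(\mathcal{H})$ is obtained from $\mathcal{H}$ by deleting repeated edges. A union of sets is connected if the intersection graph of the sets is connected. $Comp(\mathcal{H})$ is the hypergraph without repeated edges on $V(\mathcal{H})$ whose edges are $V(\mathcal{H})$, all one-element subsets, and all proper subsets of $V(\mathcal{H})$ obtainable from edges of $\mathcal{H}$ by repeated nonempty intersections and connected unions. *)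

theory Defs
  imports Main "HOL-Library.Multiset"
begin

definition hypergraph :: "'a set \<Rightarrow> 'a set multiset \<Rightarrow> bool" where
  "hypergraph V E \<longleftrightarrow> finite V \<and> (\<forall>X \<in># E. X \<noteq> {} \<and> X \<subseteq> V)"

(* Graphs on a vertex set are given by a set of (undirected) edges, each a
   2-element set.  Adjacency in the subgraph induced on S: *)
definition adj :: "'a set \<Rightarrow> 'a set set \<Rightarrow> ('a \<times> 'a) set" where
  "adj S T = {(u, v). u \<in> S \<and> v \<in> S \<and> {u, v} \<in> T}"

definition graph_connected :: "'a set \<Rightarrow> 'a set set \<Rightarrow> bool" where
  "graph_connected S T \<longleftrightarrow> (\<forall>u\<in>S. \<forall>v\<in>S. (u, v) \<in> (adj S T)\<^sup>*)"

(* A tree with vertex set V: nonempty finite vertex set, simple edges inside V,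
   connected, and acyclic (no edge lies on a cycle, i.e. deleting any edge
   disconnects the graph). *)
definition is_tree :: "'a set \<Rightarrow> 'a set set \<Rightarrow> bool" where
  "is_tree V T \<longleftrightarrow> finite V \<and> V \<noteq> {}
     \<and> (\<forall>e\<in>T. \<exists>u v. e = {u, v} \<and> u \<noteq> v \<and> u \<in> V \<and> v \<in> V)
     \<and> graph_connected V T
     \<and> (\<forall>e\<in>T. \<not> graph_connected V (T - {e}))"

definition host_tree :: "'a set \<Rightarrow> 'a set multiset \<Rightarrow> 'a set set \<Rightarrow> bool" where
  "host_tree V E T \<longleftrightarrow> is_tree V T \<and> (\<forall>X \<in># E. graph_connected X T)"

definition hypertree :: "'a set \<Rightarrow> 'a set multiset \<Rightarrow> bool" where
  "hypertree V E \<longleftrightarrow> hypergraph V E \<and> (\<exists>T. host_tree V E T)"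

definition equivalent :: "'a set \<Rightarrow> 'a set multiset \<Rightarrow> 'a set multiset \<Rightarrow> bool" where
  "equivalent V E E' \<longleftrightarrow> (\<forall>T. host_tree V E T \<longleftrightarrow> host_tree V E' T)"

definition simp_edges :: "'a set multiset \<Rightarrow> 'a set set" where
  "simp_edges E = set_mset E"

definition family_connected :: "'a set set \<Rightarrow> bool" where
  "family_connected F \<longleftrightarrow>
     (\<forall>A\<in>F. \<forall>B\<in>F. (A, B) \<in> {(X, Y). X \<in> F \<and> Y \<in> F \<and> X \<inter> Y \<noteq> {}}\<^sup>*)"

inductive_set gen_closure :: "'a set multiset \<Rightarrow> 'a set set" for E where
  base: "X \<in># E \<Longrightarrow> X \<in> gen_closure E"
| inter: "A \<in> gen_closure E \<Longrightarrow> B \<in> gen_closure E \<Longrightarrow> A \<inter> B \<noteq> {}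
           \<Longrightarrow> A \<inter> B \<in> gen_closure E"
| union: "\<forall>A\<in>F. A \<in> gen_closure E \<Longrightarrow> finite F \<Longrightarrow> F \<noteq> {} \<Longrightarrow> family_connected F
           \<Longrightarrow> \<Union>F \<in> gen_closure E"

definition comp_edges :: "'a set \<Rightarrow> 'a set multiset \<Rightarrow> 'a set set" where
  "comp_edges V E = {V} \<union> {{v} | v. v \<in> V} \<union> {X \<in> gen_closure E. X \<subset> V}"

definition induces_subtree :: "'a set set \<Rightarrow> 'a set \<Rightarrow> bool" where
  "induces_subtree T S \<longleftrightarrow> S \<noteq> {} \<and> graph_connected S T"

end

theory Submission
  imports Defs
begin

(* Subtrees of a tree are closed under nonempty intersections and connected unions, so every
   generated set is a subtree of every host tree.  Conversely, let S be a proper subset with at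
   least two vertices inducing a subtree of every host tree, and fix a host tree T.  If for an
   edge uv of T inside S and a vertex w outside S every hyperedge through u and v contained w,
   exchanging uv for the edge from w to the endpoint on the other side would give another host
   tree in which S is disconnected.  So for each edge uv of T inside S the intersection of the
   hyperedges through u and v lies in S; S is the connected union of these intersections.
   Edges of an equivalent hypertree induce subtrees of the same host trees, hence lie in
   Comp(H) by the first part. *)

lemma adj_sym: "(u, v) \<in> adj S T \<Longrightarrow> (v, u) \<in> adj S T"
  by (auto simp: adj_def insert_commute)

lemma adj_rtrancl_sym: "(u, v) \<in> (adj S T)\<^sup>* \<Longrightarrow> (v, u) \<in> (adj S T)\<^sup>*"
  by (induction rule: rtrancl_induct) (auto intro: converse_rtrancl_into_rtrancl adj_sym)

lemma adj_mono: "S \<subseteq> S' \<Longrightarrow> T \<subseteq> T' \<Longrightarrow> adj S T \<subseteq> adj S' T'"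
  by (auto simp: adj_def)

lemma adj_rtrancl_mono:
  "S \<subseteq> S' \<Longrightarrow> T \<subseteq> T' \<Longrightarrow> (u, v) \<in> (adj S T)\<^sup>* \<Longrightarrow> (u, v) \<in> (adj S' T')\<^sup>*"
  using rtrancl_mono[OF adj_mono] by blast

lemma adj_rtrancl_invariant:
  assumes "(u, v) \<in> (adj S T)\<^sup>*" and "\<And>c d. (c, d) \<in> adj S T \<Longrightarrow> c \<in> Q \<longleftrightarrow> d \<in> Q"
  shows "u \<in> Q \<longleftrightarrow> v \<in> Q"
  using assms(1) by (induction rule: rtrancl_induct) (auto dest: assms(2))

lemma graph_connected_reach:
  "graph_connected A T \<Longrightarrow> A \<subseteq> B \<Longrightarrow> u \<in> A \<Longrightarrow> v \<in> A \<Longrightarrow> (u, v) \<in> (adj B T)\<^sup>*"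
  unfolding graph_connected_def by (meson adj_rtrancl_mono order_refl)

lemma graph_connected_singleton: "graph_connected {v} T"
  by (simp add: graph_connected_def)

lemma graph_connected_Union:
  assumes "family_connected F" and "\<And>A. A \<in> F \<Longrightarrow> graph_connected A T"
  shows "graph_connected (\<Union>F) T"
  unfolding graph_connected_def
proof (intro ballI)
  fix u v assume "u \<in> \<Union>F" "v \<in> \<Union>F"
  then obtain A B where AB: "A \<in> F" "B \<in> F" "u \<in> A" "v \<in> B" by auto
  have "(A, B) \<in> {(X, Y). X \<in> F \<and> Y \<in> F \<and> X \<inter> Y \<noteq> {}}\<^sup>*"
    using assms(1) AB unfolding family_connected_def by auto
  then have "\<forall>v\<in>B. (u, v) \<in> (adj (\<Union>F) T)\<^sup>*"
  proof (induction rule: rtrancl_induct)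
    case base
    show ?case using AB assms(2) graph_connected_reach by (metis Union_upper)
  next
    case (step B C)
    then obtain m where m: "m \<in> B" "m \<in> C" "C \<in> F" by auto
    show ?case
    proof
      fix v assume "v \<in> C"
      then have "(m, v) \<in> (adj (\<Union>F) T)\<^sup>*"
        using m assms(2) graph_connected_reach by (metis Union_upper)
      then show "(u, v) \<in> (adj (\<Union>F) T)\<^sup>*" using step.IH m by (meson rtrancl_trans)
    qed
  qed
  then show "(u, v) \<in> (adj (\<Union>F) T)\<^sup>*" using AB by auto
qed

lemma is_tree_reach: "is_tree V T \<Longrightarrow> u \<in> V \<Longrightarrow> v \<in> V \<Longrightarrow> (u, v) \<in> (adj V T)\<^sup>*"
  by (auto simp: is_tree_def graph_connected_def)

lemma is_tree_edge_vertices: "is_tree V T \<Longrightarrow> {p, q} \<in> T \<Longrightarrow> p \<in> V \<and> q \<in> V"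
  unfolding is_tree_def by (metis doubleton_eq_iff)

definition edge_side :: "'a set \<Rightarrow> 'a set set \<Rightarrow> 'a set \<Rightarrow> 'a \<Rightarrow> 'a set" where
  "edge_side V T f a = {z. (a, z) \<in> (adj V (T - {f}))\<^sup>*}"

lemma edge_side_self: "a \<in> edge_side V T f a"
  by (simp add: edge_side_def)

lemma edge_side_subset: "a \<in> V \<Longrightarrow> edge_side V T f a \<subseteq> V"
  unfolding edge_side_def by (auto elim: rtranclE simp: adj_def)

lemma edge_side_closed:
  assumes "c \<in> V" "d \<in> V" "{c, d} \<in> T" "{c, d} \<noteq> f"
  shows "c \<in> edge_side V T f a \<longleftrightarrow> d \<in> edge_side V T f a"
proof -
  have "(c, d) \<in> adj V (T - {f})" using assms by (auto simp: adj_def)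
  then show ?thesis unfolding edge_side_def
    by (auto intro: rtrancl_into_rtrancl adj_sym)
qed

lemma edge_side_connected_iff:
  assumes "graph_connected Y T" "Y \<subseteq> V" "\<not> f \<subseteq> Y" "y \<in> Y" "y' \<in> Y"
  shows "y \<in> edge_side V T f a \<longleftrightarrow> y' \<in> edge_side V T f a"
  using graph_connected_reach[OF assms(1) order_refl assms(4,5)]
proof (rule adj_rtrancl_invariant)
  fix c d assume "(c, d) \<in> adj Y T"
  then have "c \<in> Y" "d \<in> Y" "{c, d} \<in> T" by (auto simp: adj_def)
  with assms(2,3) show "c \<in> edge_side V T f a \<longleftrightarrow> d \<in> edge_side V T f a"
    by (intro edge_side_closed) auto
qed

lemma edge_side_other_endpoint:
  assumes T: "is_tree V T" and f: "f = {p, q}" "f \<in> T"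
  shows "q \<notin> edge_side V T f p"
proof
  assume "q \<in> edge_side V T f p"
  then have pq: "(p, q) \<in> (adj V (T - {f}))\<^sup>*" by (simp add: edge_side_def)
  have "graph_connected V (T - {f})"
    unfolding graph_connected_def
  proof (intro ballI)
    fix x y assume "x \<in> V" "y \<in> V"
    with T have "(x, y) \<in> (adj V T)\<^sup>*" by (rule is_tree_reach)
    then show "(x, y) \<in> (adj V (T - {f}))\<^sup>*"
    proof (induction rule: rtrancl_induct)
      case (step y z)
      have "(y, z) \<in> (adj V (T - {f}))\<^sup>*"
      proof (cases "{y, z} = f")
        case True
        with f pq show ?thesis by (auto simp: doubleton_eq_iff intro: adj_rtrancl_sym)
      next
        case False
        with step.hyps show ?thesis by (auto simp: adj_def)
      qed
      with step.IH show ?case by (meson rtrancl_trans)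
    qed simp
  qed
  with T f(2) show False unfolding is_tree_def by blast
qed

lemma edge_side_cover:
  assumes T: "is_tree V T" and f: "f = {p, q}" "f \<in> T" and z: "z \<in> V"
  shows "z \<in> edge_side V T f p \<or> z \<in> edge_side V T f q"
proof -
  have "p \<in> V" using is_tree_edge_vertices[OF T] f by simp
  with T z have "(p, z) \<in> (adj V T)\<^sup>*" by (intro is_tree_reach)
  then show ?thesis
  proof (induction rule: rtrancl_induct)
    case (step y z)
    show ?case
    proof (cases "{y, z} = f")
      case True
      with f show ?thesis by (auto simp: doubleton_eq_iff edge_side_self)
    next
      case False
      with step edge_side_closed[of y V z T f] show ?thesis by (auto simp: adj_def)
    qed
  qed (simp add: edge_side_self)
qed

lemma edge_side_disjoint:
  assumes T: "is_tree V T" and f: "f = {p, q}" "f \<in> T"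
  shows "edge_side V T f p \<inter> edge_side V T f q = {}"
proof (rule ccontr)
  assume "edge_side V T f p \<inter> edge_side V T f q \<noteq> {}"
  then obtain z where "(p, z) \<in> (adj V (T - {f}))\<^sup>*" "(q, z) \<in> (adj V (T - {f}))\<^sup>*"
    by (auto simp: edge_side_def)
  then have "q \<in> edge_side V T f p"
    unfolding edge_side_def by (meson adj_rtrancl_sym rtrancl_trans mem_Collect_eq)
  with edge_side_other_endpoint[OF T f] show False ..
qed

lemma graph_connected_Int_edge_side:
  assumes T: "is_tree V T" and f: "f = {p, q}" "f \<in> T"
    and X: "graph_connected X T" "X \<subseteq> V" "p \<in> X"
  shows "graph_connected (X \<inter> edge_side V T f p) T"
proof -
  let ?P = "edge_side V T f p"
  have from_p: "(p, z) \<in> (adj (X \<inter> ?P) T)\<^sup>*" if "(p, z) \<in> (adj X T)\<^sup>*" "z \<in> ?P" for z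
    using that
  proof (induction rule: rtrancl_induct)
    case (step y z)
    then have yz: "y \<in> X" "z \<in> X" "{y, z} \<in> T" by (auto simp: adj_def)
    show ?case
    proof (cases "y \<in> ?P")
      case True
      with yz step.prems have "(y, z) \<in> adj (X \<inter> ?P) T" by (auto simp: adj_def)
      with step.IH True show ?thesis by (meson rtrancl_into_rtrancl)
    next
      case False
      with yz X(2) step.prems edge_side_closed[of y V z T f p] have "{y, z} = f" by auto
      with f False step.prems edge_side_other_endpoint[OF T f] have "z = p"
        by (auto simp: doubleton_eq_iff edge_side_self)
      then show ?thesis by simp
    qed
  qed simp
  show ?thesis unfolding graph_connected_def
  proof (intro ballI)
    fix x y assume "x \<in> X \<inter> ?P" "y \<in> X \<inter> ?P"
    with X from_p have "(p, x) \<in> (adj (X \<inter> ?P) T)\<^sup>*" "(p, y) \<in> (adj (X \<inter> ?P) T)\<^sup>*"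
      unfolding graph_connected_def by auto
    then show "(x, y) \<in> (adj (X \<inter> ?P) T)\<^sup>*" by (meson adj_rtrancl_sym rtrancl_trans)
  qed
qed

lemma graph_connected_Int:
  assumes T: "is_tree V T"
    and "X \<subseteq> V" "graph_connected X T" "Y \<subseteq> V" "graph_connected Y T"
  shows "graph_connected (X \<inter> Y) T"
  using assms(2-)
proof (induction "card X" arbitrary: X rule: less_induct)
  case less
  show ?case
  proof (cases "X \<subseteq> Y")
    case True
    with less.prems show ?thesis by (simp add: Int_absorb2)
  next
    case False
    then obtain q where q: "q \<in> X" "q \<notin> Y" by auto
    have fin: "finite X" using T less.prems(1) by (auto simp: is_tree_def intro: finite_subset)
    show ?thesis unfolding graph_connected_def
    proof (intro ballI)
      fix x y assume xy: "x \<in> X \<inter> Y" "y \<in> X \<inter> Y"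
      with less.prems(2) q have "(x, q) \<in> (adj X T)\<^sup>*" "x \<noteq> q"
        unfolding graph_connected_def by auto
      then obtain p where "(p, q) \<in> adj X T" by (metis rtranclE)
      then have f: "{p, q} \<in> T" "p \<in> X" by (auto simp: adj_def)
      obtain r r' where rr': "{p, q} = {r, r'}" "r \<in> X" "r' \<in> X" "x \<in> edge_side V T {r, r'} r"
      proof (cases "x \<in> edge_side V T {p, q} p")
        case True
        with that[of p q] f q show ?thesis by blast
      next
        case False
        with edge_side_cover[OF T refl f(1), of x] xy less.prems(1)
        have "x \<in> edge_side V T {p, q} q" by auto
        with that[of q p] f q show ?thesis by (auto simp: insert_commute)
      qed
      with f(1) have rT: "{r, r'} \<in> T" by simp
      txt \<open>Y avoids q, so it lies on one side of the edge pq; cut down to that side, X is a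
        smaller subtree that still contains x and y.\<close>
      let ?X = "X \<inter> edge_side V T {r, r'} r"
      have "\<not> {r, r'} \<subseteq> Y" using q(2) rr'(1) by blast
      from edge_side_connected_iff[OF less.prems(4,3) this, of x y r] xy rr'(4)
      have "y \<in> edge_side V T {r, r'} r" by blast
      with xy rr' have in_smaller: "x \<in> ?X \<inter> Y" "y \<in> ?X \<inter> Y" by auto
      have "r' \<notin> ?X" using edge_side_other_endpoint[OF T refl rT] by auto
      with rr'(3) have "?X \<subset> X" by blast
      with fin have "card ?X < card X" by (rule psubset_card_mono)
      moreover have "graph_connected ?X T"
        using graph_connected_Int_edge_side[OF T refl rT less.prems(2,1) rr'(2)] .
      ultimately have "graph_connected (?X \<inter> Y) T"
        using less.hyps less.prems by auto
      with in_smaller show "(x, y) \<in> (adj (X \<inter> Y) T)\<^sup>*"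
        by (elim graph_connected_reach) auto
    qed
  qed
qed

lemma gen_closure_Inter:
  "finite K \<Longrightarrow> K \<noteq> {} \<Longrightarrow> K \<subseteq> gen_closure E \<Longrightarrow> \<Inter>K \<noteq> {} \<Longrightarrow> \<Inter>K \<in> gen_closure E"
proof (induction K rule: finite_ne_induct)
  case (insert X K)
  then show ?case using gen_closure.inter[of X E "\<Inter>K"] by auto
qed simp

lemma gen_closure_subtree:
  assumes "X \<in> gen_closure E" "hypergraph V E"
  shows "X \<noteq> {} \<and> X \<subseteq> V \<and> (\<forall>T. host_tree V E T \<longrightarrow> graph_connected X T)"
  using assms(1)
proof (induction rule: gen_closure.induct)
  case (base X)
  with assms(2) show ?case by (auto simp: hypergraph_def host_tree_def)
next
  case (inter A B)
  then show ?case using graph_connected_Int[of V _ A B] by (auto simp: host_tree_def)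
next
  case (union F)
  then show ?case using graph_connected_Union[of F] by auto
qed

lemma exchange_connected:
  assumes T: "is_tree V T" and e: "e = {u, v}" "e \<in> T" and w: "w \<in> edge_side V T e u"
  shows "graph_connected V (insert {w, v} (T - {e}))"
proof -
  let ?T' = "insert {w, v} (T - {e})"
  have uv: "u \<in> V" "v \<in> V" using is_tree_edge_vertices[OF T] e by auto
  have w_V: "w \<in> V" using edge_side_subset[OF uv(1)] w by blast
  have side_reach: "(a, z) \<in> (adj V ?T')\<^sup>*" if "z \<in> edge_side V T e a" for a z
    using that adj_rtrancl_mono[of V V "T - {e}" ?T'] by (auto simp: edge_side_def)
  have from_v: "(v, z) \<in> (adj V ?T')\<^sup>*" if "z \<in> V" for z
  proof -
    have "(v, w) \<in> adj V ?T'" using uv w_V by (auto simp: adj_def insert_commute)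
    moreover have "(w, u) \<in> (adj V ?T')\<^sup>*" using side_reach[OF w] by (rule adj_rtrancl_sym)
    ultimately have vu: "(v, u) \<in> (adj V ?T')\<^sup>*" by (meson converse_rtrancl_into_rtrancl)
    from edge_side_cover[OF T e that] show ?thesis
      using side_reach[of z u] side_reach[of z v] vu by (meson rtrancl_trans)
  qed
  show ?thesis unfolding graph_connected_def
    using from_v by (meson adj_rtrancl_sym rtrancl_trans)
qed

lemma exchange_bridge:
  assumes T: "is_tree V T" and e: "e = {u, v}" "e \<in> T" and w: "w \<in> edge_side V T e u"
    and f: "f \<in> insert {w, v} (T - {e})"
  shows "\<not> graph_connected V (insert {w, v} (T - {e}) - {f})"
proof
  let ?U = "edge_side V T e u" and ?T' = "insert {w, v} (T - {e})"
  assume conn: "graph_connected V (?T' - {f})"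
  have uv: "u \<in> V" "v \<in> V" using is_tree_edge_vertices[OF T] e by auto
  have v_U: "v \<notin> ?U" using edge_side_other_endpoint[OF T e] .
  show False
  proof (cases "f = {w, v}")
    case True
    then have "?T' - {f} \<subseteq> T - {e}" by auto
    with conn uv have "(u, v) \<in> (adj V (T - {e}))\<^sup>*"
      unfolding graph_connected_def by (meson order_refl adj_rtrancl_mono)
    with v_U show False by (simp add: edge_side_def)
  next
    case False
    with f have fT: "f \<in> T" "f \<noteq> e" by auto
    then obtain a b where ab: "f = {a, b}" using T unfolding is_tree_def by blast
    have abV: "a \<in> V" "b \<in> V" using is_tree_edge_vertices[OF T] ab fT by auto
    let ?A = "edge_side V T f a"
    obtain D where D: "D = ?U \<or> D = edge_side V T e v" "a \<in> D"
      using edge_side_cover[OF T e abV(1)] by blast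
    have b_D: "b \<in> D" using D edge_side_closed[of a V b T e] abV fT ab by auto
    txt \<open>The new edge joins the two sides of e, so inside the side D of e containing f one
      of the two sides of f misses both of its endpoints; that part is closed under the
      remaining edges.\<close>
    have "w \<in> ?U" "v \<in> edge_side V T e v" "?U \<inter> edge_side V T e v = {}"
      using w edge_side_self edge_side_disjoint[OF T e] by auto
    with D obtain Q where Q: "Q = D \<inter> ?A \<or> Q = D - ?A" "w \<notin> Q" "v \<notin> Q" by blast
    have "(a, b) \<in> (adj V (?T' - {f}))\<^sup>*" using conn abV unfolding graph_connected_def by auto
    then have "a \<in> Q \<longleftrightarrow> b \<in> Q"
    proof (rule adj_rtrancl_invariant)
      fix c d assume "(c, d) \<in> adj V (?T' - {f})"
      then have cd: "c \<in> V" "d \<in> V" "{c, d} \<in> ?T' - {f}" by (auto simp: adj_def)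
      show "c \<in> Q \<longleftrightarrow> d \<in> Q"
      proof (cases "{c, d} = {w, v}")
        case True
        with Q show ?thesis by (auto simp: doubleton_eq_iff)
      next
        case False
        with cd have "{c, d} \<in> T" "{c, d} \<noteq> e" "{c, d} \<noteq> f" by auto
        then have "c \<in> D \<longleftrightarrow> d \<in> D" "c \<in> ?A \<longleftrightarrow> d \<in> ?A"
          using D edge_side_closed[OF cd(1,2)] by auto
        with Q show ?thesis by blast
      qed
    qed
    moreover have "a \<in> ?A" "b \<notin> ?A" using edge_side_self edge_side_other_endpoint[OF T ab fT(1)] .
    ultimately show False using Q D b_D by auto
  qed
qed

lemma exchange_is_tree:
  assumes T: "is_tree V T" and e: "e = {u, v}" "e \<in> T" and w: "w \<in> edge_side V T e u"
  shows "is_tree V (insert {w, v} (T - {e}))"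
proof -
  have uv: "u \<in> V" "v \<in> V" using is_tree_edge_vertices[OF T] e by auto
  have "w \<in> V" using edge_side_subset[OF uv(1)] w by blast
  moreover have "w \<noteq> v" using w edge_side_other_endpoint[OF T e] by auto
  ultimately show ?thesis
    using T uv exchange_connected[OF T e w] exchange_bridge[OF T e w]
    unfolding is_tree_def by blast
qed

lemma exchange_keeps_connected:
  assumes T: "is_tree V T" and e: "e = {u, v}" "e \<in> T" and w: "w \<in> edge_side V T e u"
    and X: "X \<subseteq> V" "graph_connected X T" "u \<in> X \<and> v \<in> X \<longrightarrow> w \<in> X"
  shows "graph_connected X (insert {w, v} (T - {e}))"
  unfolding graph_connected_def
proof (intro ballI)
  let ?U = "edge_side V T e u" and ?T' = "insert {w, v} (T - {e})"
  fix x y assume "x \<in> X" "y \<in> X"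
  with X(2) have "(x, y) \<in> (adj X T)\<^sup>*" unfolding graph_connected_def by auto
  then show "(x, y) \<in> (adj X ?T')\<^sup>*"
  proof (induction rule: rtrancl_induct)
    case (step y z)
    then have yz: "y \<in> X" "z \<in> X" "{y, z} \<in> T" by (auto simp: adj_def)
    have "(y, z) \<in> (adj X ?T')\<^sup>*"
    proof (cases "{y, z} = e")
      case False
      with yz show ?thesis by (auto simp: adj_def)
    next
      case True
      with e yz have uv_X: "u \<in> X" "v \<in> X" and yz_uv: "{y, z} = {u, v}" by auto
      with X(3) have w_X: "w \<in> X" by auto
      have "(u, w) \<in> (adj (X \<inter> ?U) T)\<^sup>*"
        using graph_connected_Int_edge_side[OF T e X(2,1) uv_X(1)] uv_X(1) w_X w edge_side_self
        unfolding graph_connected_def by fastforce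
      moreover have "adj (X \<inter> ?U) T \<subseteq> adj X ?T'"
        using edge_side_other_endpoint[OF T e] e by (auto simp: adj_def doubleton_eq_iff)
      ultimately have "(u, w) \<in> (adj X ?T')\<^sup>*" using rtrancl_mono by blast
      moreover have "(w, v) \<in> adj X ?T'" using w_X uv_X by (auto simp: adj_def)
      ultimately have "(u, v) \<in> (adj X ?T')\<^sup>*" by (rule rtrancl_into_rtrancl)
      with yz_uv show ?thesis by (auto simp: doubleton_eq_iff intro: adj_rtrancl_sym)
    qed
    with step.IH show ?case by (meson rtrancl_trans)
  qed simp
qed

lemma exchange_disconnects:
  assumes T: "is_tree V T" and e: "e = {u, v}" "e \<in> T"
    and S: "S \<subseteq> V" "u \<in> S" "v \<in> S" "w \<notin> S"
  shows "\<not> graph_connected S (insert {w, v} (T - {e}))"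
proof
  assume "graph_connected S (insert {w, v} (T - {e}))"
  with S have "(u, v) \<in> (adj S (insert {w, v} (T - {e})))\<^sup>*"
    unfolding graph_connected_def by auto
  then have "u \<in> edge_side V T e u \<longleftrightarrow> v \<in> edge_side V T e u"
  proof (rule adj_rtrancl_invariant)
    fix c d assume "(c, d) \<in> adj S (insert {w, v} (T - {e}))"
    then have cd: "c \<in> S" "d \<in> S" "{c, d} \<in> insert {w, v} (T - {e})" by (auto simp: adj_def)
    with S have "{c, d} \<in> T" "{c, d} \<noteq> e" by (auto simp: doubleton_eq_iff)
    with cd S show "c \<in> edge_side V T e u \<longleftrightarrow> d \<in> edge_side V T e u"
      by (intro edge_side_closed) auto
  qed
  with edge_side_self[of u] edge_side_other_endpoint[OF T e] show False by blast
qed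

lemma host_tree_exchange:
  assumes H: "hypergraph V E" "host_tree V E T"
    and e: "e = {u, v}" "e \<in> T" and w: "w \<in> edge_side V T e u"
    and covers: "\<And>X. X \<in># E \<Longrightarrow> u \<in> X \<Longrightarrow> v \<in> X \<Longrightarrow> w \<in> X"
  shows "host_tree V E (insert {w, v} (T - {e}))"
  using H exchange_is_tree[OF _ e w] exchange_keeps_connected[OF _ e w] covers
  by (auto simp: host_tree_def hypergraph_def)

lemma common_subtree_edges_separated:
  assumes H: "hypergraph V E" "host_tree V E T"
    and S: "S \<subseteq> V" "\<forall>T. host_tree V E T \<longrightarrow> induces_subtree T S"
    and uv: "(u, v) \<in> adj S T" and w: "w \<in> V" "w \<notin> S"
  shows "\<exists>X\<in>#E. u \<in> X \<and> v \<in> X \<and> w \<notin> X"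
proof (rule ccontr)
  assume "\<not> ?thesis"
  then have covers: "\<And>X. X \<in># E \<Longrightarrow> u \<in> X \<Longrightarrow> v \<in> X \<Longrightarrow> w \<in> X" by blast
  have T: "is_tree V T" using H(2) by (simp add: host_tree_def)
  have uv_S: "{u, v} \<in> T" "u \<in> S" "v \<in> S" using uv by (auto simp: adj_def)
  obtain a b where ab: "{a, b} = {u, v}" "w \<in> edge_side V T {a, b} a"
    using edge_side_cover[OF T refl uv_S(1) w(1)] by (metis insert_commute)
  from ab(1) uv_S(1) have ab_T: "{a, b} \<in> T" by simp
  from ab(1) uv_S(2,3) have ab_S: "a \<in> S" "b \<in> S" by (auto simp: doubleton_eq_iff)
  have covers_ab: "w \<in> X" if "X \<in># E" "a \<in> X" "b \<in> X" for X
  proof -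
    from that(2,3) have "{u, v} \<subseteq> X" unfolding ab(1)[symmetric] by simp
    with covers[OF that(1)] show ?thesis by simp
  qed
  have "host_tree V E (insert {w, b} (T - {{a, b}}))"
    using host_tree_exchange[OF H refl ab_T ab(2) covers_ab] .
  moreover have "\<not> graph_connected S (insert {w, b} (T - {{a, b}}))"
    using exchange_disconnects[OF T refl ab_T S(1) ab_S w(2)] .
  ultimately show False using S(2) by (auto simp: induces_subtree_def)
qed

definition pair_hull :: "'a set multiset \<Rightarrow> 'a \<Rightarrow> 'a \<Rightarrow> 'a set" where
  "pair_hull E a b = \<Inter>{X. X \<in># E \<and> a \<in> X \<and> b \<in> X}"

lemma pair_hull_in_gen_closure:
  assumes "X \<in># E" "a \<in> X" "b \<in> X"
  shows "pair_hull E a b \<in> gen_closure E"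
proof -
  let ?K = "{X. X \<in># E \<and> a \<in> X \<and> b \<in> X}"
  have "finite ?K" by (rule finite_subset[of _ "set_mset E"]) auto
  with assms show ?thesis
    unfolding pair_hull_def by (intro gen_closure_Inter) (auto intro: gen_closure.base)
qed

(* w\<^sub>0 forces some hyperedge through a and b; without one the hull would be UNIV. *)
lemma pair_hull_subset:
  assumes "hypergraph V E" "w\<^sub>0 \<in> V - S"
    and separated: "\<And>w. w \<in> V - S \<Longrightarrow> \<exists>X\<in>#E. a \<in> X \<and> b \<in> X \<and> w \<notin> X"
  shows "pair_hull E a b \<subseteq> S"
proof
  fix z assume z: "z \<in> pair_hull E a b"
  obtain X where "X \<in># E" "a \<in> X" "b \<in> X" using separated[OF assms(2)] by blast
  with z assms(1) have "z \<in> V" by (auto simp: pair_hull_def hypergraph_def)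
  with z separated show "z \<in> S" by (fastforce simp: pair_hull_def)
qed

lemma family_connected_edge_image:
  assumes S: "graph_connected S T" and K: "\<And>a b. (a, b) \<in> adj S T \<Longrightarrow> a \<in> K a b \<and> b \<in> K a b"
  shows "family_connected ((\<lambda>(a, b). K a b) ` adj S T)"
  unfolding family_connected_def
proof (intro ballI)
  let ?F = "(\<lambda>(a, b). K a b) ` adj S T"
  let ?r = "{(X, Y). X \<in> ?F \<and> Y \<in> ?F \<and> X \<inter> Y \<noteq> {}}"
  have in_F: "K a b \<in> ?F" if "(a, b) \<in> adj S T" for a b using that by force
  have along_path: "(K a b, K z z') \<in> ?r\<^sup>*"
    if ab: "(a, b) \<in> adj S T" and "(a, z) \<in> (adj S T)\<^sup>*" and "(z, z') \<in> adj S T" for a b z z'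
    using that(2,3)
  proof (induction arbitrary: z' rule: rtrancl_induct)
    case base
    with ab in_F K have "(K a b, K a z') \<in> ?r" by blast
    then show ?case by (rule r_into_rtrancl)
  next
    case (step y z)
    with in_F K have "(K y z, K z z') \<in> ?r" by blast
    with step.IH[OF step.hyps(2)] show ?case by (rule rtrancl_into_rtrancl)
  qed
  fix A B assume "A \<in> ?F" "B \<in> ?F"
  then obtain a b c d where abcd: "(a, b) \<in> adj S T" "(c, d) \<in> adj S T" "A = K a b" "B = K c d"
    by auto
  then have "(a, c) \<in> (adj S T)\<^sup>*" using S by (auto simp: graph_connected_def adj_def)
  with abcd show "(A, B) \<in> ?r\<^sup>*" using along_path by blast
qed

lemma pair_hull_mem: "a \<in> pair_hull E a b" "b \<in> pair_hull E a b"
  by (auto simp: pair_hull_def)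

lemma common_subtree_in_comp_edges:
  assumes H: "hypertree V E" and S: "S \<noteq> {}" "S \<subseteq> V"
    and common: "\<forall>T. host_tree V E T \<longrightarrow> induces_subtree T S"
  shows "S \<in> comp_edges V E"
proof -
  obtain T where T: "host_tree V E T" using H by (auto simp: hypertree_def)
  have hg: "hypergraph V E" using H by (simp add: hypertree_def)
  have S_conn: "graph_connected S T" using common T by (simp add: induces_subtree_def)
  consider "S = V" | v where "S = {v}" | (proper) "S \<subset> V" "\<And>s. s \<in> S \<Longrightarrow> \<exists>s'\<in>S. s' \<noteq> s"
    using S by blast
  then show ?thesis
  proof cases
    case proper
    then obtain w\<^sub>0 where w\<^sub>0: "w\<^sub>0 \<in> V - S" by blast
    have separated: "\<exists>X\<in>#E. a \<in> X \<and> b \<in> X \<and> w \<notin> X" if "(a, b) \<in> adj S T" "w \<in> V - S" for a b w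
      using common_subtree_edges_separated[OF hg T S(2) common] that by blast
    let ?F = "(\<lambda>(a, b). pair_hull E a b) ` adj S T"
    have "\<forall>A\<in>?F. A \<in> gen_closure E"
    proof
      fix A assume "A \<in> ?F"
      then obtain a b where ab: "(a, b) \<in> adj S T" "A = pair_hull E a b" by auto
      from separated[OF ab(1) w\<^sub>0] obtain X where "X \<in># E" "a \<in> X" "b \<in> X" by blast
      with ab(2) show "A \<in> gen_closure E" by (simp add: pair_hull_in_gen_closure)
    qed
    moreover have "finite ?F"
    proof -
      have "finite S" using hg S(2) by (auto simp: hypergraph_def intro: finite_subset)
      moreover have "adj S T \<subseteq> S \<times> S" by (auto simp: adj_def)
      ultimately show ?thesis by (simp add: finite_subset)
    qed
    moreover have "family_connected ?F"
      by (rule family_connected_edge_image[OF S_conn]) (simp add: pair_hull_mem)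
    moreover have "\<Union>?F = S"
    proof
      show "\<Union>?F \<subseteq> S"
        using pair_hull_subset[OF hg w\<^sub>0 separated] by auto
      show "S \<subseteq> \<Union>?F"
      proof
        fix s assume s: "s \<in> S"
        with proper obtain s' where "s' \<in> S" "s' \<noteq> s" by blast
        with s S_conn have "(s, s') \<in> (adj S T)\<^sup>*" "s \<noteq> s'" by (auto simp: graph_connected_def)
        then obtain y where "(s, y) \<in> adj S T" by (metis converse_rtranclE)
        then have "pair_hull E s y \<in> ?F" by force
        then show "s \<in> \<Union>?F" using pair_hull_mem(1) by (rule UnionI)
      qed
    qed
    ultimately have "S \<in> gen_closure E" using S(1) gen_closure.union[of ?F E] by auto
    with proper show ?thesis by (simp add: comp_edges_def)
  qed (use S in \<open>auto simp: comp_edges_def\<close>)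
qed

lemma comp_edges_common_subtree:
  assumes H: "hypertree V E" and X: "X \<in> comp_edges V E"
  shows "X \<noteq> {} \<and> X \<subseteq> V \<and> (\<forall>T. host_tree V E T \<longrightarrow> induces_subtree T X)"
proof -
  have "V \<noteq> {}" using H by (auto simp: hypertree_def host_tree_def is_tree_def)
  with X gen_closure_subtree[of X E V] H show ?thesis
    by (auto simp: comp_edges_def induces_subtree_def hypertree_def host_tree_def is_tree_def
        graph_connected_singleton)
qed

theorem mainTheorem5:
  fixes V :: "'a set" and E :: "'a set multiset"
  assumes "hypertree V E"
  shows "comp_edges V E =
           {S. S \<noteq> {} \<and> S \<subseteq> V \<and> (\<forall>T. host_tree V E T \<longrightarrow> induces_subtree T S)}
         \<and> (\<forall>E'. hypertree V E' \<and> equivalent V E E' \<longrightarrow> simp_edges E' \<subseteq> comp_edges V E)"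
proof
  show comp: "comp_edges V E =
           {S. S \<noteq> {} \<and> S \<subseteq> V \<and> (\<forall>T. host_tree V E T \<longrightarrow> induces_subtree T S)}"
    using comp_edges_common_subtree[OF assms] common_subtree_in_comp_edges[OF assms] by blast
  show "\<forall>E'. hypertree V E' \<and> equivalent V E E' \<longrightarrow> simp_edges E' \<subseteq> comp_edges V E"
  proof (intro allI impI subsetI)
    fix E' X assume E': "hypertree V E' \<and> equivalent V E E'" and "X \<in> simp_edges E'"
    then have "X \<in># E'" by (simp add: simp_edges_def)
    with E' have "X \<noteq> {}" "X \<subseteq> V" "\<forall>T. host_tree V E' T \<longrightarrow> graph_connected X T"
      by (auto simp: hypertree_def hypergraph_def host_tree_def)
    with E' comp show "X \<in> comp_edges V E"
      by (auto simp: equivalent_def induces_subtree_def)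
  qed
qed

end
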